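(* Let $M=p_1^{n_1}\cdots p_K^{n_K}$ with distinct primes and $n_\nu\in\mathbb{N}$, and let $A\oplus B=\mathbb{Z}_M$. Fix distinct $i,j\in\{1,\dots,K\}$, let $z\in\mathbb{Z}_M$ and $\Lambda_{ij}=\Lambda(z,M/(p_ip_j))$. Suppose that $a_0*F_i\subset A$ for some $a_0\in\Sigma_A(\Lambda_{ij})$. Then $\Sigma_A(\Lambda_{ij})\subset\Pi(a_0,p_j^{n_j-1})$.
   Context: $A\oplus B=\mathbb{Z}_M$ means every element of $\mathbb{Z}_M$ is uniquely $a+b$ with $a\in A$, $b\in B$. For $d\mid M$, $\Lambda(x,d)=\{x'\in\mathbb{Z}_M: d\mid x-x'\}$, and $\Pi(x,p^\alpha)=\Lambda(x,p^\alpha)$. $F_i=\{0,M/p_i,\dots,(p_i-1)M/p_i\}$, $x*F_i=\{x+f:f\in F_i\}$. For $Z\subset\mathbb{Z}_M$, $\Sigma_A(Z)=\{a\in A:a+b\in Z\text{ for some }b\in B\}$. *)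

theory Defs
  imports "HOL-Number_Theory.Number_Theory"
begin

text \<open>Z_M is modelled as {0..<M} :: nat set, with addition mod M.\<close>

definition ZM :: "nat \<Rightarrow> nat set" where
  "ZM M = {0..<M}"

definition tiling :: "nat \<Rightarrow> nat set \<Rightarrow> nat set \<Rightarrow> bool" where
  "tiling M A B \<longleftrightarrow> A \<subseteq> ZM M \<and> B \<subseteq> ZM M \<and>
     (\<forall>x\<in>ZM M. \<exists>!ab. ab \<in> A \<times> B \<and> (fst ab + snd ab) mod M = x)"

definition Lam :: "nat \<Rightarrow> nat \<Rightarrow> nat \<Rightarrow> nat set" where
  "Lam M x d = {x' \<in> ZM M. int d dvd int x - int x'}"

definition Pi_set :: "nat \<Rightarrow> nat \<Rightarrow> nat \<Rightarrow> nat set" where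
  "Pi_set M x q = Lam M x q"

definition F :: "nat \<Rightarrow> nat \<Rightarrow> nat set" where
  "F M p = {k * (M div p) | k. k < p}"

definition star :: "nat \<Rightarrow> nat \<Rightarrow> nat set \<Rightarrow> nat set" where
  "star M x S = {(x + f) mod M | f. f \<in> S}"

definition SigmaA :: "nat \<Rightarrow> nat set \<Rightarrow> nat set \<Rightarrow> nat set \<Rightarrow> nat set" where
  "SigmaA M A B Z = {a \<in> A. \<exists>b\<in>B. (a + b) mod M \<in> Z}"

end

theory Submission
  imports Defs "HOL-Computational_Algebra.Polynomial"
begin

(* The proof rests on Tijdeman's dilation theorem: if A + B tiles Z_M and t is coprime to M,
   then so does tA + B. For a prime t not dividing M this is a count modulo t: in
   Z[X]/(X^M - 1) the product A(X) B(X) is the all-ones polynomial and A(X)^t = A(X^t) mod t,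
   so every residue x is hit by some t a + b, and a cardinality argument gives uniqueness.

   Given a, a0 in Sigma_A(Lambda_ij) with partners b, b0, the difference (a + b) - (a0 + b0) is
   a multiple of M/(p_i p_j), hence equals k M/p_i + l M/p_j. The fiber a0 * F_i contains some
   a' = a0 + k M/p_i (mod M), so (a + b) - (a' + b0) = l M/p_j (mod M). If p_j^(n_j - 1) did not
   divide a - a', with m < n_j - 1 its p_j-adic valuation, a dilation t = 1 + s M/p_j^(m+1) would
   give t a + b = t a' + b0 (mod M), forcing a = a'. As a' = a0 modulo p_j^(n_j - 1), the claim
   follows. *)

section \<open>Frobenius congruence and polynomials modulo \<open>X^M - 1\<close>\<close>

lemma prime_dvd_power_add_sub:
  fixes x y :: "'a::comm_ring_1"
  assumes "prime p"
  shows "of_nat p dvd (x + y) ^ p - (x ^ p + y ^ p)"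
proof -
  have p0: "p > 0" using assms prime_gt_0_nat by blast
  have "{..p} = insert p (insert 0 {1..<p})" using p0 by auto
  then have "(x + y) ^ p = x ^ p + y ^ p + (\<Sum>k\<in>{1..<p}. of_nat (p choose k) * x ^ k * y ^ (p - k))"
    using p0 by (simp add: binomial_ring add_ac)
  moreover have "of_nat p dvd (of_nat (p choose k) :: 'a)" if "k \<in> {1..<p}" for k
  proof -
    have "p dvd p choose k"
      using dvd_choose_prime[of k p] that assms by auto
    then obtain d where "p choose k = p * d" ..
    then show ?thesis by simp
  qed
  ultimately show ?thesis by (auto intro!: dvd_sum dvd_mult2)
qed

lemma prime_dvd_power_sum_sub:
  fixes f :: "'b \<Rightarrow> 'a::comm_ring_1"
  assumes "prime p"
  shows "of_nat p dvd (\<Sum>i\<in>I. f i) ^ p - (\<Sum>i\<in>I. f i ^ p)"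
proof (induction I rule: infinite_finite_induct)
  case (insert i I)
  have "(\<Sum>i\<in>insert i I. f i) ^ p - (\<Sum>i\<in>insert i I. f i ^ p) =
      ((f i + (\<Sum>i\<in>I. f i)) ^ p - (f i ^ p + (\<Sum>i\<in>I. f i) ^ p))
      + ((\<Sum>i\<in>I. f i) ^ p - (\<Sum>i\<in>I. f i ^ p))"
    using insert.hyps by simp
  then show ?case
    by (metis dvd_add insert.IH prime_dvd_power_add_sub[OF assms])
qed (use assms prime_gt_0_nat in \<open>simp_all add: zero_power\<close>)

text \<open>\<open>cyclic_coeff M P x\<close> is the coefficient of \<open>X^x\<close> in \<open>P\<close> reduced modulo \<open>X^M - 1\<close>.\<close>

definition cyclic_coeff :: "nat \<Rightarrow> 'a::comm_monoid_add poly \<Rightarrow> nat \<Rightarrow> 'a" where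
  "cyclic_coeff M P x = (\<Sum>k\<in>{k\<in>{..degree P}. k mod M = x}. coeff P k)"

lemma cyclic_coeff_altdef:
  assumes "degree P \<le> N"
  shows "cyclic_coeff M P x = (\<Sum>k\<in>{k\<in>{..N}. k mod M = x}. coeff P k)"
  unfolding cyclic_coeff_def
  by (rule sum.mono_neutral_left) (use assms le_degree in auto)

lemma cyclic_coeff_0 [simp]: "cyclic_coeff M 0 x = 0"
  by (simp add: cyclic_coeff_def)

lemma cyclic_coeff_add: "cyclic_coeff M (P + Q) x = cyclic_coeff M P x + cyclic_coeff M Q x"
proof -
  define N where "N = max (degree P) (degree Q)"
  have "degree (P + Q) \<le> N" "degree P \<le> N" "degree Q \<le> N"
    using degree_add_le_max[of P Q] by (auto simp: N_def)
  then show ?thesis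
    by (simp add: cyclic_coeff_altdef[of _ N] sum.distrib)
qed

lemma cyclic_coeff_diff:
  fixes P Q :: "'a::ab_group_add poly"
  shows "cyclic_coeff M (P - Q) x = cyclic_coeff M P x - cyclic_coeff M Q x"
  using cyclic_coeff_add[of M "P - Q" Q x] by (simp add: algebra_simps)

lemma cyclic_coeff_smult: "cyclic_coeff M (smult c P) x = c * cyclic_coeff M P x"
  using degree_smult_le[of c P]
  by (simp add: cyclic_coeff_altdef[of _ "degree P"] sum_distrib_left)

lemma cyclic_coeff_sum: "cyclic_coeff M (\<Sum>i\<in>I. f i) x = (\<Sum>i\<in>I. cyclic_coeff M (f i) x)"
  by (induction I rule: infinite_finite_induct) (simp_all add: cyclic_coeff_add)

lemma cyclic_coeff_monom: "cyclic_coeff M (monom c k) x = (if k mod M = x then c else 0)"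
  using degree_monom_le[of c k]
  by (simp add: cyclic_coeff_altdef[of _ k] coeff_monom)

lemma cyclic_coeff_sum_monom:
  assumes "finite I"
  shows "cyclic_coeff M (\<Sum>i\<in>I. monom 1 (g i)) x = of_nat (card {i\<in>I. g i mod M = x})"
  using assms by (simp add: cyclic_coeff_sum cyclic_coeff_monom sum.If_cases Int_def)

lemma cyclic_coeff_pCons_0: "cyclic_coeff M (pCons 0 P) (Suc x mod M) = cyclic_coeff M P (x mod M)"
proof -
  have Suc_cong: "Suc k mod M = Suc x mod M \<longleftrightarrow> k mod M = x mod M" for k
    by (metis Suc_eq_plus1 cong_add_rcancel_nat cong_def)
  have "cyclic_coeff M (pCons 0 P) (Suc x mod M)
      = (\<Sum>k\<in>{k\<in>{..Suc (degree P)}. k mod M = Suc x mod M}. coeff (pCons 0 P) k)"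
    by (rule cyclic_coeff_altdef) (rule degree_pCons_le)
  also have "\<dots> = (\<Sum>k\<le>Suc (degree P). if k mod M = Suc x mod M then coeff (pCons 0 P) k else 0)"
    by (rule sum.inter_filter) simp
  also have "\<dots> = (\<Sum>k\<le>degree P. if Suc k mod M = Suc x mod M then coeff P k else 0)"
    by (simp only: sum.atMost_Suc_shift coeff_pCons_0 coeff_pCons_Suc if_cancel add_0_left)
  also have "\<dots> = cyclic_coeff M P (x mod M)"
    unfolding Suc_cong cyclic_coeff_def by (rule sum.inter_filter[symmetric]) simp
  finally show ?thesis .
qed

lemma cyclic_coeff_mult_const:
  fixes R :: "'a::comm_semiring_1 poly"
  assumes "0 < M" and "\<forall>y<M. cyclic_coeff M R y = c"
  shows "\<forall>x<M. cyclic_coeff M (S * R) x = poly S 1 * c"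
proof (induction S)
  case 0
  then show ?case using assms by simp
next
  case (pCons a S)
  show ?case
  proof (intro allI impI)
    fix x assume "x < M"
    then have x: "x = Suc (x + M - 1) mod M" using assms(1) by simp
    have "cyclic_coeff M (pCons 0 (S * R)) x = cyclic_coeff M (S * R) ((x + M - 1) mod M)"
      by (subst x) (rule cyclic_coeff_pCons_0)
    also have "\<dots> = poly S 1 * c" using pCons.IH assms(1) by simp
    finally show "cyclic_coeff M (pCons a S * R) x = poly (pCons a S) 1 * c"
      using assms \<open>x < M\<close> by (simp add: mult_pCons_left cyclic_coeff_add cyclic_coeff_smult algebra_simps)
  qed
qed

lemma cyclic_coeff_const_dvd:
  fixes c :: "'a::comm_semiring_1"
  assumes "[:c:] dvd P"
  shows "c dvd cyclic_coeff M P x"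
proof -
  obtain R where "P = [:c:] * R" using assms ..
  then show ?thesis by (simp add: cyclic_coeff_smult)
qed

section \<open>Tijdeman's dilation theorem\<close>

lemma tiling_iff_bij_betw:
  "tiling M A B \<longleftrightarrow>
    A \<subseteq> ZM M \<and> B \<subseteq> ZM M \<and> bij_betw (\<lambda>(a, b). (a + b) mod M) (A \<times> B) (ZM M)"
proof (cases "A \<subseteq> ZM M \<and> B \<subseteq> ZM M")
  case True
  define f where "f = (\<lambda>(a, b). (a + b) mod M)"
  have f: "f ab = (fst ab + snd ab) mod M" for ab by (simp add: f_def case_prod_beta)
  have img: "f ` (A \<times> B) \<subseteq> ZM M"
    using True by (fastforce simp: f_def ZM_def)
  have "(\<forall>x\<in>ZM M. \<exists>!ab. ab \<in> A \<times> B \<and> (fst ab + snd ab) mod M = x) \<longleftrightarrow>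
      inj_on f (A \<times> B) \<and> f ` (A \<times> B) = ZM M"
    unfolding f[symmetric]
  proof (intro iffI conjI)
    assume unique: "\<forall>x\<in>ZM M. \<exists>!ab. ab \<in> A \<times> B \<and> f ab = x"
    show "inj_on f (A \<times> B)"
    proof (rule inj_onI)
      fix u v assume "u \<in> A \<times> B" "v \<in> A \<times> B" "f u = f v"
      moreover from img \<open>u \<in> A \<times> B\<close> have "f u \<in> ZM M" by blast
      ultimately show "u = v" using unique by (metis (no_types, lifting))
    qed
    show "f ` (A \<times> B) = ZM M"
    proof (rule subset_antisym[OF img], rule subsetI)
      fix x assume "x \<in> ZM M"
      then obtain ab where "ab \<in> A \<times> B" "f ab = x" using unique by (metis ex1_implies_ex)
      then show "x \<in> f ` (A \<times> B)" by (metis image_eqI)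
    qed
  next
    assume bij: "inj_on f (A \<times> B) \<and> f ` (A \<times> B) = ZM M"
    show "\<forall>x\<in>ZM M. \<exists>!ab. ab \<in> A \<times> B \<and> f ab = x"
    proof
      fix x assume "x \<in> ZM M"
      then obtain ab where "ab \<in> A \<times> B" "f ab = x" using bij by (metis imageE)
      then show "\<exists>!ab. ab \<in> A \<times> B \<and> f ab = x"
        using bij inj_onD by metis
    qed
  qed
  then show ?thesis
    unfolding tiling_def bij_betw_def f_def[symmetric] using True by blast
qed (auto simp: tiling_def)

lemma tiling_finite_card:
  assumes "tiling M A B"
  shows "finite A" "finite B" "card A * card B = M"
proof -
  from assms have sub: "A \<subseteq> ZM M" "B \<subseteq> ZM M"
    and bij: "bij_betw (\<lambda>(a, b). (a + b) mod M) (A \<times> B) (ZM M)"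
    by (simp_all add: tiling_iff_bij_betw)
  show "finite A" "finite B"
    using sub by (auto simp: ZM_def intro: finite_subset)
  show "card A * card B = M"
    using bij_betw_same_card[OF bij] by (simp add: card_cartesian_product ZM_def)
qed

lemma tiling_sum_eq_imp_eq:
  assumes "tiling M A B" and "a \<in> A" "a' \<in> A" "b \<in> B" "b' \<in> B"
    and "(a + b) mod M = (a' + b') mod M"
  shows "a = a' \<and> b = b'"
proof -
  from assms(1) have "inj_on (\<lambda>(a, b). (a + b) mod M) (A \<times> B)"
    by (simp add: tiling_iff_bij_betw bij_betw_def)
  from inj_onD[OF this, of "(a, b)" "(a', b')"] assms(2-6) show ?thesis by simp
qed

lemma tiling_card_fiber:
  assumes "tiling M A B" and "x < M"
  shows "card {(a, b) \<in> A \<times> B. (a + b) mod M = x} = 1"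
proof -
  from assms have "\<exists>!ab. ab \<in> A \<times> B \<and> (fst ab + snd ab) mod M = x"
    by (simp add: tiling_def ZM_def)
  then obtain ab where "{ab' \<in> A \<times> B. (fst ab' + snd ab') mod M = x} = {ab}"
    by blast
  moreover have "{(a, b) \<in> A \<times> B. (a + b) mod M = x} = {ab' \<in> A \<times> B. (fst ab' + snd ab') mod M = x}"
    by auto
  ultimately show ?thesis by simp
qed

lemma sum_monom_mult_sum_monom:
  "(\<Sum>a\<in>A. monom (1::'a::comm_semiring_1) (f a)) * (\<Sum>b\<in>B. monom 1 b)
    = (\<Sum>(a, b)\<in>A \<times> B. monom 1 (f a + b))"
  by (simp add: sum_product sum.cartesian_product mult_monom)

lemma card_dilated_sums_cong:
  assumes tile: "tiling M A B" and p: "prime p" and x: "x < M"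
  shows "[card {(a, b) \<in> A \<times> B. (p * a + b) mod M = x} = card A ^ (p - 1)] (mod p)"
proof -
  have fin: "finite A" "finite B" using tiling_finite_card[OF tile] by simp_all
  define PA PB :: "int poly" where "PA = (\<Sum>a\<in>A. monom 1 a)" and "PB = (\<Sum>b\<in>B. monom 1 b)"
  have count: "cyclic_coeff M ((\<Sum>a\<in>A. monom 1 (f a)) * PB) y
      = int (card {(a, b) \<in> A \<times> B. (f a + b) mod M = y})" for f y
  proof -
    have "{ab \<in> A \<times> B. (case ab of (a, b) \<Rightarrow> f a + b) mod M = y}
        = {(a, b) \<in> A \<times> B. (f a + b) mod M = y}" by auto
    then show ?thesis
      using cyclic_coeff_sum_monom[of "A \<times> B" M "\<lambda>(a, b). f a + b" y] fin
      by (simp add: PB_def sum_monom_mult_sum_monom case_prod_unfold)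
  qed
  have unit: "\<forall>y<M. cyclic_coeff M (PA * PB) y = 1"
    using count[of id] tiling_card_fiber[OF tile] by (simp add: PA_def)
  obtain k where k: "p = Suc k" using prime_gt_0_nat[OF p] gr0_implies_Suc by blast
  then have "PA ^ p * PB = PA ^ (p - 1) * (PA * PB)"
    by (simp only: k diff_Suc_1 power_Suc2 mult.assoc)
  also have "cyclic_coeff M \<dots> x = poly (PA ^ (p - 1)) 1 * 1"
    using cyclic_coeff_mult_const[of M "PA * PB" 1 "PA ^ (p - 1)"] unit x by simp
  also have "\<dots> = int (card A) ^ (p - 1)"
    by (simp add: PA_def poly_power poly_sum poly_monom)
  finally have power: "cyclic_coeff M (PA ^ p * PB) x = int (card A) ^ (p - 1)" .
  have "of_nat p dvd PA ^ p - (\<Sum>a\<in>A. monom 1 (p * a))"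
    using prime_dvd_power_sum_sub[OF p, of "\<lambda>a. monom 1 a" A]
    by (simp add: PA_def monom_power mult.commute)
  then have "[:int p:] dvd PA ^ p * PB - (\<Sum>a\<in>A. monom 1 (p * a)) * PB"
    by (simp add: of_nat_poly left_diff_distrib[symmetric])
  then have "int p dvd cyclic_coeff M (PA ^ p * PB) x - cyclic_coeff M ((\<Sum>a\<in>A. monom 1 (p * a)) * PB) x"
    by (metis cyclic_coeff_const_dvd cyclic_coeff_diff)
  then have "[int (card {(a, b) \<in> A \<times> B. (p * a + b) mod M = x}) = int (card A ^ (p - 1))] (mod int p)"
    by (simp add: power count cong_iff_dvd_diff dvd_diff_commute)
  then show ?thesis by (simp only: cong_int_iff)
qed

lemma tiling_image:
  assumes B: "B \<subseteq> ZM M" and fA: "f ` A \<subseteq> ZM M"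
    and bij: "bij_betw (\<lambda>(a, b). (f a + b) mod M) (A \<times> B) (ZM M)"
  shows "tiling M (f ` A) B"
proof -
  have "(\<lambda>(a, b). (a + b) mod M) ` (f ` A \<times> B) = (\<lambda>(a, b). (f a + b) mod M) ` (A \<times> B)"
    by force
  moreover have "inj_on (\<lambda>(a, b). (a + b) mod M) (f ` A \<times> B)"
  proof (rule inj_onI, clarify)
    fix a b a' b' assume "a \<in> A" "b \<in> B" "a' \<in> A" "b' \<in> B"
      and "(f a + b) mod M = (f a' + b') mod M"
    then have "(a, b) = (a', b')"
      using inj_onD[OF bij_betw_imp_inj_on[OF bij], of "(a, b)" "(a', b')"] by simp
    then show "f a = f a' \<and> b = b'" by simp
  qed
  ultimately show ?thesis
    using B fA bij by (simp add: tiling_iff_bij_betw bij_betw_def)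
qed

lemma tiling_dilate_prime:
  assumes tile: "tiling M A B" and p: "prime p" and "\<not> p dvd M"
  shows "tiling M ((\<lambda>a. p * a mod M) ` A) B"
proof -
  have "M > 0" using \<open>\<not> p dvd M\<close> by (intro gr0I) auto
  have fin: "finite A" "finite B" and card: "card A * card B = M"
    using tiling_finite_card[OF tile] by simp_all
  have hit: "\<exists>(a, b)\<in>A \<times> B. (p * a + b) mod M = x" if "x < M" for x
  proof (rule ccontr)
    assume "\<not> ?thesis"
    then have "{(a, b) \<in> A \<times> B. (p * a + b) mod M = x} = {}" by auto
    then have "[card A ^ (p - 1) = 0] (mod p)"
      using card_dilated_sums_cong[OF tile p that] by (metis card.empty cong_sym)
    then have "p dvd card A ^ (p - 1)" by (simp only: cong_0_iff)
    then have "p dvd M"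
      using p card by (metis dvd_mult2 prime_dvd_power)
    with \<open>\<not> p dvd M\<close> show False ..
  qed
  define g where "g = (\<lambda>(a, b). (p * a mod M + b) mod M)"
  have "g ` (A \<times> B) = ZM M"
  proof
    show "g ` (A \<times> B) \<subseteq> ZM M" using \<open>M > 0\<close> by (auto simp: g_def ZM_def)
    show "ZM M \<subseteq> g ` (A \<times> B)"
    proof
      fix x assume "x \<in> ZM M"
      then obtain a b where "a \<in> A" "b \<in> B" "(p * a + b) mod M = x"
        using hit[of x] by (auto simp: ZM_def)
      then show "x \<in> g ` (A \<times> B)"
        by (auto simp: g_def mod_add_left_eq intro!: image_eqI[where x = "(a, b)"])
    qed
  qed
  moreover have "card (A \<times> B) = card (ZM M)"
    using card by (simp add: card_cartesian_product ZM_def)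
  ultimately have "bij_betw g (A \<times> B) (ZM M)"
    using fin by (simp add: bij_betw_def inj_on_iff_eq_card)
  moreover have "B \<subseteq> ZM M" using tile by (simp add: tiling_def)
  ultimately show ?thesis
    using \<open>M > 0\<close> by (intro tiling_image) (auto simp: g_def ZM_def)
qed

lemma tiling_dilate:
  assumes tile: "tiling M A B" and "coprime t M"
  shows "tiling M ((\<lambda>a. t * a mod M) ` A) B"
  using \<open>coprime t M\<close>
proof (induction t rule: less_induct)
  case (less t)
  show ?case
  proof (cases "t \<le> 1")
    case True
    then have "t = 1 \<or> M = 1"
      using less.prems by (cases "t = 0") simp_all
    moreover have "a < M" if "a \<in> A" for a
      using tile that by (auto simp: tiling_def ZM_def)
    ultimately have "(\<lambda>a. t * a mod M) ` A = (\<lambda>a. a) ` A"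
      by (intro image_cong) auto
    then show ?thesis using tile by simp
  next
    case False
    then obtain q where q: "prime q" "q dvd t" using prime_factor_nat[of t] by auto
    from \<open>q dvd t\<close> obtain t' where t: "t = q * t'" ..
    have "0 < t'" using False t by (cases t') simp_all
    then have "t' < t" using prime_gt_1_nat[OF q(1)] t by (simp add: n_less_m_mult_n)
    moreover have "coprime t' M" using less.prems t by simp
    ultimately have "tiling M ((\<lambda>a. t' * a mod M) ` A) B" by (rule less.IH)
    moreover have "\<not> q dvd M"
      using less.prems q by (metis coprime_common_divisor not_prime_unit)
    ultimately have "tiling M ((\<lambda>a. q * a mod M) ` (\<lambda>a. t' * a mod M) ` A) B"
      by (rule tiling_dilate_prime[OF _ q(1)])
    moreover have "(\<lambda>a. q * a mod M) ` (\<lambda>a. t' * a mod M) ` A = (\<lambda>a. t * a mod M) ` A"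
      unfolding image_image t by (simp add: mod_mult_right_eq mult.assoc)
    ultimately show ?thesis by simp
  qed
qed

lemma tiling_dilated_sum_eq_imp_eq:
  assumes tile: "tiling M A B" and "coprime t M"
    and a: "a \<in> A" "a' \<in> A" and b: "b \<in> B" "b' \<in> B"
    and sums: "(t * a + b) mod M = (t * a' + b') mod M"
  shows "a = a' \<and> b = b'"
proof -
  have "(t * a mod M + b) mod M = (t * a' mod M + b') mod M"
    using sums by (simp only: mod_add_left_eq)
  with tiling_sum_eq_imp_eq[OF tiling_dilate[OF tile \<open>coprime t M\<close>]] a b
  have "t * a mod M = t * a' mod M" and "b = b'"
    by blast+
  moreover have "a < M" "a' < M" using tile a by (auto simp: tiling_def ZM_def)
  ultimately show ?thesis
    using cong_mult_lcancel_nat[OF \<open>coprime t M\<close>, of a a'] unfolding cong_def by simp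
qed

section \<open>The valuation argument\<close>

lemma coprime_one_plus_mult:
  fixes s N M :: nat
  assumes "\<And>r. prime r \<Longrightarrow> r dvd M \<Longrightarrow> r dvd N"
  shows "coprime (1 + s * N) M"
proof (rule ccontr)
  assume "\<not> coprime (1 + s * N) M"
  then have "gcd (1 + s * N) M \<noteq> 1" using coprime_iff_gcd_eq_1 by blast
  then obtain r where "prime r" "r dvd gcd (1 + s * N) M"
    using prime_factor_nat by blast
  then have "r dvd 1 + s * N" "r dvd M" by (simp_all only: gcd_greatest_iff)
  with \<open>prime r\<close> have "r dvd N" using assms by blast
  then have "r dvd s * N" by (rule dvd_mult)
  with \<open>r dvd 1 + s * N\<close> have "r dvd 1" by (simp only: dvd_add_left_iff)
  with \<open>prime r\<close> show False by simp
qed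

lemma prime_dvd_div_prime_power:
  fixes q r M k :: nat
  assumes q: "prime q" and "q ^ Suc k dvd M" and r: "prime r" "r dvd M"
  shows "r dvd M div q ^ k"
proof -
  obtain c where M: "M = q ^ Suc k * c" using \<open>q ^ Suc k dvd M\<close> ..
  have "M = q ^ k * (q * c)" by (simp add: M ac_simps)
  then have "M div q ^ k = q * c" using q by (simp add: prime_gt_0_nat)
  moreover have "r dvd q * c"
  proof (cases "r = q")
    case False
    have "\<not> r dvd q ^ Suc k"
      using False q r(1) prime_dvd_power primes_dvd_imp_eq by blast
    with r have "r dvd c" by (simp add: M prime_dvd_mult_iff)
    then show ?thesis by (rule dvd_mult)
  qed simp
  ultimately show ?thesis by simp
qed

lemma exists_nat_linear_solution_mod_prime:
  fixes \<alpha> l :: int and q :: nat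
  assumes q: "prime q" and "\<not> int q dvd \<alpha>"
  shows "\<exists>s::nat. int q dvd int s * \<alpha> + l"
proof -
  have "prime (int q)" using q by simp
  then have "coprime (int q) \<alpha>" using assms(2) by (rule prime_imp_coprime)
  then have "coprime \<alpha> (int q)" by (simp only: coprime_commute)
  then obtain x where x: "[\<alpha> * x = 1] (mod int q)"
    using cong_solve_coprime_int by blast
  define s where "s = nat ((- l * x) mod int q)"
  have "int s = (- l * x) mod int q"
    using prime_gt_0_nat[OF q] by (simp add: s_def)
  then have "[int s = - l * x] (mod int q)" by (simp add: cong_def)
  then have "[int s * \<alpha> + l = - l * (\<alpha> * x) + l] (mod int q)"
    by (metis cong_add_rcancel cong_scalar_right mult.assoc mult.commute)
  also have "[- l * (\<alpha> * x) + l = - l * 1 + l] (mod int q)"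
    using x by (intro cong_add cong_mult cong_refl)
  finally show ?thesis by (auto simp: cong_0_iff)
qed

lemma tiling_prime_power_dvd_diff:
  assumes tile: "tiling M A B" and q: "prime q" and qe: "q ^ Suc e dvd M"
    and a: "a \<in> A" "a' \<in> A" and b: "b \<in> B" "b' \<in> B"
    and sums: "int M dvd (int a + int b) - (int a' + int b') - l * int (M div q)"
  shows "int q ^ e dvd int a - int a'"
proof (rule ccontr)
  define \<alpha> where "\<alpha> = int a - int a'"
  assume "\<not> int q ^ e dvd int a - int a'"
  then have nd: "\<not> int q ^ e dvd \<alpha>" by (simp add: \<alpha>_def)
  then have "\<alpha> \<noteq> 0" by auto
  have "prime (int q)" using q by simp
  then have q_nonunit: "\<not> is_unit (int q)" using not_prime_unit by blast
  define m where "m = multiplicity (int q) \<alpha>"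
  have "m < e" using multiplicity_lessI[OF \<open>\<alpha> \<noteq> 0\<close> q_nonunit nd] by (simp add: m_def)
  obtain \<alpha>' where \<alpha>: "\<alpha> = int q ^ m * \<alpha>'" and "\<not> int q dvd \<alpha>'"
    using multiplicity_decompose'[OF \<open>\<alpha> \<noteq> 0\<close> q_nonunit] by (metis m_def)
  obtain s where s: "int q dvd int s * \<alpha>' + l"
    using exists_nat_linear_solution_mod_prime[OF q \<open>\<not> int q dvd \<alpha>'\<close>] by blast
  define N where "N = M div q ^ Suc m"
  have "Suc (Suc m) \<le> Suc e" using \<open>m < e\<close> by simp
  then have "q ^ Suc (Suc m) dvd M"
    using qe by (meson dvd_trans le_imp_power_dvd)
  then have M: "M = N * q ^ Suc m" and Mq: "M div q = N * q ^ m"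
    using q by (auto simp: N_def prime_gt_0_nat elim!: dvdE)
  define t where "t = 1 + s * N"
  have "coprime t M"
    unfolding t_def N_def
    by (intro coprime_one_plus_mult prime_dvd_div_prime_power[OF q \<open>q ^ Suc (Suc m) dvd M\<close>])
  have "int t * \<alpha> + (int b - int b')
      = (\<alpha> + (int b - int b') - l * int (M div q)) + (int s * \<alpha>' + l) * int N * int q ^ m"
    by (simp add: t_def Mq \<alpha> algebra_simps)
  moreover have "int M dvd \<alpha> + (int b - int b') - l * int (M div q)"
    using sums by (simp add: \<alpha>_def algebra_simps)
  moreover have "int M dvd (int s * \<alpha>' + l) * int N * int q ^ m"
    using s by (simp add: M mult_dvd_mono mult.commute mult.left_commute)
  ultimately have "int M dvd int t * \<alpha> + (int b - int b')"
    by (simp only: dvd_add)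
  then have "int M dvd (int t * int a + int b) - (int t * int a' + int b')"
    by (simp add: \<alpha>_def algebra_simps)
  then have "(t * a + b) mod M = (t * a' + b') mod M"
    by (metis cong_iff_dvd_diff cong_int_iff cong_def of_nat_add of_nat_mult)
  then have "a = a'"
    using tiling_dilated_sum_eq_imp_eq[OF tile \<open>coprime t M\<close> a b] by blast
  with \<open>\<alpha> \<noteq> 0\<close> show False by (simp add: \<alpha>_def)
qed

lemma cofactor_decomposition:
  fixes P Q M :: nat and d :: int
  assumes "coprime P Q" and "P * Q dvd M" and "int (M div (P * Q)) dvd d"
  obtains k l where "d = k * int (M div P) + l * int (M div Q)"
proof -
  define D where "D = M div (P * Q)"
  obtain w where d: "d = int D * w" using assms(3) by (auto simp: D_def)
  have "coprime (int Q) (int P)" using assms(1) by (simp add: coprime_commute)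
  then obtain u v where uv: "u * int Q + v * int P = 1"
    using bezout_int[of "int Q" "int P"] by (auto dest: coprime_imp_gcd_eq_1)
  have "M = D * (P * Q)" using assms(2) by (simp add: D_def)
  then have divs: "M div P = D * Q" "M div Q = D * P"
    using assms(2) by (auto simp: D_def)
  have "d = int D * w * (u * int Q + v * int P)" using uv d by simp
  also have "\<dots> = (w * u) * int (M div P) + (w * v) * int (M div Q)"
    using divs by (simp add: algebra_simps)
  finally show ?thesis by (rule that)
qed

lemma fiber_shift_mem:
  assumes fiber: "star M a0 (F M P) \<subseteq> A" and "P dvd M" and "0 < P"
  obtains a' where "a' \<in> A" and "int M dvd int a' - int a0 - k * int (M div P)"
proof -
  define k' where "k' = nat (k mod int P)"
  have "k' < P" and k': "int k' = k mod int P"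
    using \<open>0 < P\<close> by (simp_all add: k'_def nat_less_iff)
  define a' where "a' = (a0 + k' * (M div P)) mod M"
  have "a' \<in> star M a0 (F M P)"
    using \<open>k' < P\<close> by (auto simp: a'_def star_def F_def)
  with fiber have "a' \<in> A" ..
  have "int M dvd int a' - (int a0 + int k' * int (M div P))"
    unfolding a'_def by (simp add: of_nat_mod flip: mod_eq_dvd_iff)
  moreover have "int P dvd int k' - k"
    unfolding k' by (simp flip: mod_eq_dvd_iff)
  then have "int P * int (M div P) dvd (int k' - k) * int (M div P)"
    by (rule mult_dvd_mono) simp
  then have "int M dvd (int k' - k) * int (M div P)"
    using \<open>P dvd M\<close> by (simp flip: of_nat_mult)
  ultimately have "int M dvd (int a' - (int a0 + int k' * int (M div P))) + (int k' - k) * int (M div P)"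
    by (rule dvd_add)
  then have "int M dvd int a' - int a0 - k * int (M div P)"
    by (simp add: algebra_simps)
  with \<open>a' \<in> A\<close> show ?thesis by (rule that)
qed

lemma SigmaA_Lam_dvd:
  assumes "x \<in> SigmaA M A B (Lam M z d)" and "d dvd M"
  obtains b where "x \<in> A" and "b \<in> B" and "int d dvd int z - (int x + int b)"
proof -
  obtain b where "x \<in> A" "b \<in> B" and "int d dvd int z - int ((x + b) mod M)"
    using assms(1) by (auto simp: SigmaA_def Lam_def)
  moreover have "int M dvd int ((x + b) mod M) - (int x + int b)"
    by (simp add: of_nat_mod flip: mod_eq_dvd_iff)
  then have "int d dvd int ((x + b) mod M) - (int x + int b)"
    using \<open>d dvd M\<close> by (meson dvd_trans of_nat_dvd_iff)
  ultimately have "int d dvd (int z - int ((x + b) mod M)) + (int ((x + b) mod M) - (int x + int b))"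
    by (simp only: dvd_add)
  then have "int d dvd int z - (int x + int b)" by (simp add: algebra_simps)
  with \<open>x \<in> A\<close> \<open>b \<in> B\<close> show ?thesis by (rule that)
qed

lemma SigmaA_Lam_sums_dvd:
  assumes "a \<in> SigmaA M A B (Lam M z d)" and "a0 \<in> SigmaA M A B (Lam M z d)" and "d dvd M"
  obtains b b0 where "a \<in> A" "a0 \<in> A" "b \<in> B" "b0 \<in> B"
    and "int d dvd (int a + int b) - (int a0 + int b0)"
proof -
  obtain b where "a \<in> A" "b \<in> B" and ab: "int d dvd int z - (int a + int b)"
    using SigmaA_Lam_dvd[OF assms(1,3)] .
  obtain b0 where "a0 \<in> A" "b0 \<in> B" and ab0: "int d dvd int z - (int a0 + int b0)"
    using SigmaA_Lam_dvd[OF assms(2,3)] .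
  have "int d dvd (int a + int b) - (int a0 + int b0)"
    using dvd_diff[OF ab0 ab] by (simp add: algebra_simps)
  with \<open>a \<in> A\<close> \<open>a0 \<in> A\<close> \<open>b \<in> B\<close> \<open>b0 \<in> B\<close> show ?thesis by (rule that)
qed

lemma SigmaA_Lam_subset_Pi_set:
  assumes tile: "tiling M A B" and P: "prime P" and Q: "prime Q" and "P \<noteq> Q"
    and "P dvd M" and Qe: "Q ^ Suc e dvd M"
    and a0: "a0 \<in> SigmaA M A B (Lam M z (M div (P * Q)))"
    and fiber: "star M a0 (F M P) \<subseteq> A"
  shows "SigmaA M A B (Lam M z (M div (P * Q))) \<subseteq> Pi_set M a0 (Q ^ e)"
proof
  fix a assume a: "a \<in> SigmaA M A B (Lam M z (M div (P * Q)))"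
  have "coprime P Q" using P Q \<open>P \<noteq> Q\<close> by (rule primes_coprime)
  moreover have "Q dvd M" using Qe by (meson dvd_power dvd_trans zero_less_Suc)
  ultimately have "P * Q dvd M" using \<open>P dvd M\<close> by (simp add: divides_mult)
  then have "M div (P * Q) dvd M" by force
  then obtain b b0 where "a \<in> A" "a0 \<in> A" "b \<in> B" "b0 \<in> B"
    and "int (M div (P * Q)) dvd (int a + int b) - (int a0 + int b0)"
    by (rule SigmaA_Lam_sums_dvd[OF a a0])
  then obtain k l where kl: "(int a + int b) - (int a0 + int b0) = k * int (M div P) + l * int (M div Q)"
    using cofactor_decomposition[OF \<open>coprime P Q\<close> \<open>P * Q dvd M\<close>] by blast
  obtain a' where "a' \<in> A" and a': "int M dvd int a' - int a0 - k * int (M div P)"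
    using fiber_shift_mem[OF fiber \<open>P dvd M\<close> prime_gt_0_nat[OF P]] .
  have "(int a + int b) - (int a' + int b0) - l * int (M div Q) = - (int a' - int a0 - k * int (M div P))"
    using kl by linarith
  then have "int M dvd (int a + int b) - (int a' + int b0) - l * int (M div Q)"
    using a' by (simp only: dvd_minus_iff)
  then have "int Q ^ e dvd int a - int a'"
    using tiling_prime_power_dvd_diff[OF tile Q Qe \<open>a \<in> A\<close> \<open>a' \<in> A\<close> \<open>b \<in> B\<close> \<open>b0 \<in> B\<close>] by blast
  moreover have "int Q ^ e dvd int a' - int a0"
  proof -
    have "Q ^ Suc e dvd P * (M div P)" using Qe \<open>P dvd M\<close> by simp
    then have "Q ^ Suc e dvd M div P"
      using \<open>coprime P Q\<close> by (simp add: coprime_dvd_mult_right_iff coprime_commute)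
    then have "int Q ^ e dvd k * int (M div P)" and "int Q ^ e dvd int M"
      using Qe by (auto intro: dvd_trans[OF le_imp_power_dvd] simp flip: of_nat_power)
    with a' show ?thesis by (metis diff_add_cancel dvd_add dvd_trans)
  qed
  ultimately have "int Q ^ e dvd (int a - int a') + (int a' - int a0)"
    by (rule dvd_add)
  then have "int Q ^ e dvd int a0 - int a"
    by (simp add: dvd_diff_commute[of _ "int a"])
  with \<open>a \<in> A\<close> tile show "a \<in> Pi_set M a0 (Q ^ e)"
    by (auto simp: Pi_set_def Lam_def tiling_def)
qed

theorem corollary7p2:
  fixes K M :: nat and p n :: "nat \<Rightarrow> nat" and A B :: "nat set" and i j z a0 :: nat
  assumes primes: "\<forall>\<nu>\<in>{1..K}. prime (p \<nu>)"
    and distinct: "inj_on p {1..K}"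
    and exps: "\<forall>\<nu>\<in>{1..K}. n \<nu> \<ge> 1"
    and M_def: "M = (\<Prod>\<nu>\<in>{1..K}. p \<nu> ^ n \<nu>)"
    and tile: "tiling M A B"
    and ij: "i \<in> {1..K}" "j \<in> {1..K}" "i \<noteq> j"
    and z: "z \<in> ZM M"
    and a0: "a0 \<in> SigmaA M A B (Lam M z (M div (p i * p j)))"
    and fiber: "star M a0 (F M (p i)) \<subseteq> A"
  shows "SigmaA M A B (Lam M z (M div (p i * p j))) \<subseteq> Pi_set M a0 (p j ^ (n j - 1))"
proof -
  have P: "prime (p i)" and Q: "prime (p j)" using primes ij by auto
  have "p i \<noteq> p j" using inj_onD[OF distinct _ ij(1,2)] ij(3) by blast
  have prime_power_dvd: "p \<nu> ^ n \<nu> dvd M" if "\<nu> \<in> {1..K}" for \<nu>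
    unfolding M_def by (rule dvd_prodI[OF finite_atLeastAtMost that])
  have "1 \<le> n i" "1 \<le> n j" using exps ij(1,2) by blast+
  then have "p i dvd p i ^ n i" and "Suc (n j - 1) = n j" by (simp_all add: dvd_power)
  then have "p i dvd M" and "p j ^ Suc (n j - 1) dvd M"
    using prime_power_dvd[OF ij(1)] prime_power_dvd[OF ij(2)] by (auto intro: dvd_trans)
  show ?thesis
    by (rule SigmaA_Lam_subset_Pi_set[OF tile P Q \<open>p i \<noteq> p j\<close> \<open>p i dvd M\<close>
          \<open>p j ^ Suc (n j - 1) dvd M\<close> a0 fiber])
qed

end
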